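(* Fix $c\in\{1,\dots,K-1\}$ and suppose $$\bar p_c(\bm x,\bar Y)=\binom{K-1}{c}^{-1}\sum_{y\notin \bar Y}p(\bm x,y)\qquad(\bm x\in\mathcal X,\ \bar Y\in\overline{\mathcal Y}_c).$$ For $\gamma\in[0,1]$ define $$R^u_c(\bm g)=\mathbb E_{\bar p_c(\bm x,\bar Y)}\Big[(1-\gamma)\mathcal L(\bm g(\bm x))-\frac{K-1}{c}\sum_{y\in\bar Y}\ell(\bm g(\bm x),y)\Big]+\gamma\,\mathbb E_{p(\bm x)}\big[\mathcal L(\bm g(\bm x))\big].$$ Then for any loss $\ell$ and decision function $\bm g$ (with finite expectations), $R^u_c(\bm g)=R(\bm g)$.
   Context: Let $K\ge 2$, $\mathcal X\subseteq\mathbb R^d$ the feature space and $\mathcal Y=\{1,\dots,K\}$ the label space. Let $p(\bm x,y)$ be a joint density on $\mathcal X\times\mathcal Y$ with marginal density $p(\bm x)$. For $c\in\{1,\dots,K-1\}$, $\overline{\mathcal Y}_c$ denotes the collection of all $c$-element subsets of $\{1,\dots,K\}$, and $\bar p_c(\bm x,\bar Y)$ is a density on $\mathcal X\times\overline{\mathcal Y}_c$. A decision function is a map $\bm g:\mathcal X\to\mathbb R^K$, a loss is a function $\ell:\mathbb R^K\times\mathcal Y\to[0,\infty)$, the classification risk is $R(\bm g)=\mathbb E_{p(\bm x,y)}[\ell(\bm g(\bm x),y)]$, and the cumulative loss is $\mathcal L(\bm g(\bm x))=\sum_{y=1}^K\ell(\bm g(\bm x),y)$. *)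

theory Defs
  imports "HOL-Analysis.Analysis"
begin

text \<open>Labels are 1..K; feature space X is a Borel subset of a Euclidean space,
densities are w.r.t. Lebesgue measure on X (times counting measure on labels).
Vectors in R^K are represented as functions nat => real.\<close>

definition label_set :: "nat \<Rightarrow> nat set" where
  "label_set K = {1..K}"

definition comp_label_sets :: "nat \<Rightarrow> nat \<Rightarrow> nat set set" where
  "comp_label_sets K c = {Y. Y \<subseteq> {1..K} \<and> card Y = c}"

definition joint_density :: "'a::euclidean_space set \<Rightarrow> nat \<Rightarrow> ('a \<Rightarrow> nat \<Rightarrow> real) \<Rightarrow> bool" where
  "joint_density X K p \<longleftrightarrow> X \<in> sets lborel \<and> (\<forall>x y. 0 \<le> p x y)
     \<and> (\<forall>y\<in>label_set K. set_integrable lborel X (\<lambda>x. p x y))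
     \<and> (\<Sum>y\<in>label_set K. LINT x:X|lborel. p x y) = 1"

definition marginal :: "nat \<Rightarrow> ('a \<Rightarrow> nat \<Rightarrow> real) \<Rightarrow> 'a \<Rightarrow> real" where
  "marginal K p x = (\<Sum>y\<in>label_set K. p x y)"

definition cumulative_loss :: "nat \<Rightarrow> ((nat \<Rightarrow> real) \<Rightarrow> nat \<Rightarrow> real) \<Rightarrow> (nat \<Rightarrow> real) \<Rightarrow> real" where
  "cumulative_loss K loss v = (\<Sum>y\<in>label_set K. loss v y)"

definition class_risk :: "'a::euclidean_space set \<Rightarrow> nat \<Rightarrow> ('a \<Rightarrow> nat \<Rightarrow> real)
    \<Rightarrow> ((nat \<Rightarrow> real) \<Rightarrow> nat \<Rightarrow> real) \<Rightarrow> ('a \<Rightarrow> nat \<Rightarrow> real) \<Rightarrow> real" where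
  "class_risk X K p loss g = (LINT x:X|lborel. (\<Sum>y\<in>label_set K. p x y * loss (g x) y))"

definition comp_integrand :: "nat \<Rightarrow> nat \<Rightarrow> real \<Rightarrow> ('a \<Rightarrow> nat set \<Rightarrow> real)
    \<Rightarrow> ((nat \<Rightarrow> real) \<Rightarrow> nat \<Rightarrow> real) \<Rightarrow> ('a \<Rightarrow> nat \<Rightarrow> real) \<Rightarrow> 'a \<Rightarrow> real" where
  "comp_integrand K c \<gamma> pbar loss g x =
     (\<Sum>Yb\<in>comp_label_sets K c. pbar x Yb *
        ((1 - \<gamma>) * cumulative_loss K loss (g x)
          - (real K - 1) / real c * (\<Sum>y\<in>Yb. loss (g x) y)))"

definition unbiased_comp_risk :: "'a::euclidean_space set \<Rightarrow> nat \<Rightarrow> nat \<Rightarrow> real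
    \<Rightarrow> ('a \<Rightarrow> nat \<Rightarrow> real) \<Rightarrow> ('a \<Rightarrow> nat set \<Rightarrow> real)
    \<Rightarrow> ((nat \<Rightarrow> real) \<Rightarrow> nat \<Rightarrow> real) \<Rightarrow> ('a \<Rightarrow> nat \<Rightarrow> real) \<Rightarrow> real" where
  "unbiased_comp_risk X K c \<gamma> p pbar loss g =
     (LINT x:X|lborel. comp_integrand K c \<gamma> pbar loss g x)
     + \<gamma> * (LINT x:X|lborel. marginal K p x * cumulative_loss K loss (g x))"

end

theory Submission
  imports Defs
begin

text \<open>
  The identity holds pointwise in \<open>x\<close>, so integrability is only needed to split the integral.
  Pointwise it is double counting over the \<open>c\<close>-subsets \<open>Y\<close> of the \<open>K\<close> labels: a label avoids
  \<open>(K-1 choose c)\<close> of them, and an ordered pair of distinct labels \<open>(y, y')\<close> has \<open>y \<notin> Y\<close>,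
  \<open>y' \<in> Y\<close> for \<open>(K-2 choose c-1)\<close> of them. Hence the weighted complementary term equals
  \<open>(K-1)/c \<cdot> (K-2 choose c-1) / (K-1 choose c) \<cdot> (P L - Q)\<close>, where \<open>P = \<Sum>p\<close>, \<open>L = \<Sum>\<ell>\<close> and
  \<open>Q = \<Sum>p \<ell>\<close>; the absorption identity \<open>c (K-1 choose c) = (K-1) (K-2 choose c-1)\<close> makes the
  coefficient 1, and the \<open>\<gamma>\<close>-terms cancel against the marginal term, leaving \<open>Q\<close>.
\<close>

lemma card_subsets_avoiding:
  assumes "finite I" "y \<in> I"
  shows "card {Y. Y \<subseteq> I \<and> card Y = c \<and> y \<notin> Y} = (card I - 1) choose c"
proof -
  have "{Y. Y \<subseteq> I \<and> card Y = c \<and> y \<notin> Y} = {Y. Y \<subseteq> I - {y} \<and> card Y = c}"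
    by auto
  then show ?thesis
    using assms n_subsets[of "I - {y}" c] by simp
qed

lemma card_subsets_separating:
  assumes "finite I" "y \<in> I" "y' \<in> I" "y \<noteq> y'" "0 < c"
  shows "card {Y. Y \<subseteq> I \<and> card Y = c \<and> y \<notin> Y \<and> y' \<in> Y} = (card I - 2) choose (c - 1)"
proof -
  let ?J = "I - {y, y'}"
  have fin: "finite ?J" using assms(1) by simp
  have "{Y. Y \<subseteq> I \<and> card Y = c \<and> y \<notin> Y \<and> y' \<in> Y} = insert y' ` {B. B \<subseteq> ?J \<and> card B = c - 1}"
  proof (intro equalityI subsetI)
    fix Y assume Y: "Y \<in> {Y. Y \<subseteq> I \<and> card Y = c \<and> y \<notin> Y \<and> y' \<in> Y}"
    then have "Y - {y'} \<subseteq> ?J" "card (Y - {y'}) = c - 1" "Y = insert y' (Y - {y'})"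
      using finite_subset[OF _ assms(1)] by auto
    then show "Y \<in> insert y' ` {B. B \<subseteq> ?J \<and> card B = c - 1}" by blast
  next
    fix Y assume "Y \<in> insert y' ` {B. B \<subseteq> ?J \<and> card B = c - 1}"
    then obtain B where "B \<subseteq> ?J" "card B = c - 1" "Y = insert y' B" by blast
    moreover have "finite B" "y' \<notin> B" using \<open>B \<subseteq> ?J\<close> finite_subset[OF _ fin] by auto
    ultimately show "Y \<in> {Y. Y \<subseteq> I \<and> card Y = c \<and> y \<notin> Y \<and> y' \<in> Y}"
      using assms by auto
  qed
  moreover have "inj_on (insert y') {B. B \<subseteq> ?J \<and> card B = c - 1}"
    by (rule inj_onI) blast
  moreover have "card ?J = card I - 2"
    using assms by (simp add: card_Diff_subset)
  ultimately show ?thesis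
    using n_subsets[OF fin, of "c - 1"] by (simp add: card_image)
qed

lemma sum_subsets_sum_complement:
  fixes p :: "'b \<Rightarrow> 'c::comm_semiring_1"
  assumes "finite I"
  shows "(\<Sum>Y | Y \<subseteq> I \<and> card Y = c. \<Sum>y\<in>I - Y. p y) = of_nat ((card I - 1) choose c) * sum p I"
proof -
  let ?S = "{Y. Y \<subseteq> I \<and> card Y = c}"
  have fin: "finite ?S" using assms by simp
  have "(\<Sum>Y\<in>?S. \<Sum>y\<in>I - Y. p y) = (\<Sum>Y\<in>?S. \<Sum>y | y \<in> I \<and> y \<notin> Y. p y)"
    by (simp add: set_diff_eq)
  also have "\<dots> = (\<Sum>y\<in>I. \<Sum>Y | Y \<in> ?S \<and> y \<notin> Y. p y)"
    by (rule sum.swap_restrict[OF fin assms])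
  also have "\<dots> = (\<Sum>y\<in>I. of_nat ((card I - 1) choose c) * p y)"
    using card_subsets_avoiding[OF assms] by (intro sum.cong) auto
  finally show ?thesis by (simp add: sum_distrib_left)
qed

lemma sum_subsets_sum_complement_times_sum:
  fixes p l :: "'b \<Rightarrow> 'c::comm_ring_1"
  assumes "finite I" "0 < c"
  shows "(\<Sum>Y | Y \<subseteq> I \<and> card Y = c. (\<Sum>y\<in>I - Y. p y) * (\<Sum>y\<in>Y. l y))
    = of_nat ((card I - 2) choose (c - 1)) * (sum p I * sum l I - (\<Sum>y\<in>I. p y * l y))"
proof -
  let ?S = "{Y. Y \<subseteq> I \<and> card Y = c}"
  let ?C = "of_nat ((card I - 2) choose (c - 1)) :: 'c"
  have fin: "finite ?S" using assms by simp
  have "(\<Sum>Y\<in>?S. (\<Sum>y\<in>I - Y. p y) * (\<Sum>y\<in>Y. l y))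
      = (\<Sum>Y\<in>?S. \<Sum>y | y \<in> I \<and> y \<notin> Y. \<Sum>y' | y' \<in> I \<and> y' \<in> Y. p y * l y')"
    by (intro sum.cong) (auto simp: set_diff_eq sum_product Int_absorb1 simp flip: Collect_conj_eq Int_def)
  also have "\<dots> = (\<Sum>y\<in>I. \<Sum>Y | Y \<in> ?S \<and> y \<notin> Y. \<Sum>y' | y' \<in> I \<and> y' \<in> Y. p y * l y')"
    by (rule sum.swap_restrict[OF fin assms(1)])
  also have "\<dots> = (\<Sum>y\<in>I. \<Sum>y'\<in>I. \<Sum>Y | Y \<in> ?S \<and> y \<notin> Y \<and> y' \<in> Y. p y * l y')"
    by (intro sum.cong refl, subst sum.swap_restrict) (auto intro: finite_subset[OF _ fin] simp: conj_assoc assms(1))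
  also have "\<dots> = (\<Sum>y\<in>I. \<Sum>y'\<in>I. ?C * (p y * l y') - (if y = y' then ?C * (p y * l y') else 0))"
    using card_subsets_separating[OF assms(1) _ _ _ assms(2)] by (intro sum.cong refl) auto
  also have "\<dots> = (\<Sum>y\<in>I. ?C * (p y * sum l I) - ?C * (p y * l y))"
    by (simp add: sum_subtractf sum_distrib_left assms(1))
  also have "\<dots> = ?C * (sum p I * sum l I - (\<Sum>y\<in>I. p y * l y))"
    by (simp add: sum_subtractf right_diff_distrib sum_distrib_left sum_distrib_right) (rule sum.swap)
  finally show ?thesis .
qed

lemma complementary_risk_pointwise:
  fixes p l :: "'b \<Rightarrow> real"
  assumes "finite I" "card I = K" "0 < c" "c < K"
  shows "(\<Sum>Y | Y \<subseteq> I \<and> card Y = c. (\<Sum>y\<in>I - Y. p y) / real ((K - 1) choose c)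
            * ((1 - \<gamma>) * sum l I - (real K - 1) / real c * sum l Y))
         + \<gamma> * (sum p I * sum l I) = (\<Sum>y\<in>I. p y * l y)"
proof -
  let ?S = "{Y. Y \<subseteq> I \<and> card Y = c}"
  define N where "N = real ((K - 1) choose c)"
  define C where "C = real ((K - 2) choose (c - 1))"
  define P L Q where "P = sum p I" and "L = sum l I" and "Q = (\<Sum>y\<in>I. p y * l y)"
  have "N > 0" unfolding N_def using assms by simp
  have "c * ((K - 1) choose c) = (K - 1) * ((K - 2) choose (c - 1))"
    using times_binomial_minus1_eq[of c "K - 1"] assms by (simp add: numeral_2_eq_2)
  then have "real (c * ((K - 1) choose c)) = real ((K - 1) * ((K - 2) choose (c - 1)))"
    by (simp only:)
  then have "real c * N = (real K - 1) * C"
    unfolding N_def C_def using assms by (simp add: of_nat_diff)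
  then have absorb: "(real K - 1) / real c * C = N"
    using assms by (simp add: field_simps)
  have "(\<Sum>Y\<in>?S. (\<Sum>y\<in>I - Y. p y) / N * ((1 - \<gamma>) * L - (real K - 1) / real c * sum l Y))
      = (\<Sum>Y\<in>?S. (1 - \<gamma>) * L / N * (\<Sum>y\<in>I - Y. p y)
          - (real K - 1) / real c / N * ((\<Sum>y\<in>I - Y. p y) * sum l Y))"
    using \<open>N > 0\<close> assms by (intro sum.cong refl) (simp add: field_simps)
  also have "\<dots> = (1 - \<gamma>) * L / N * (\<Sum>Y\<in>?S. \<Sum>y\<in>I - Y. p y)
        - (real K - 1) / real c / N * (\<Sum>Y\<in>?S. (\<Sum>y\<in>I - Y. p y) * sum l Y)"
    by (simp only: sum_subtractf sum_distrib_left)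
  also have "\<dots> = (1 - \<gamma>) * L / N * (N * P) - (real K - 1) / real c * C / N * (P * L - Q)"
    using sum_subsets_sum_complement[OF assms(1), where c = c and p = p]
      sum_subsets_sum_complement_times_sum[OF assms(1,3), where p = p and l = l]
    by (simp add: N_def C_def P_def L_def Q_def assms(2))
  also have "\<dots> = (1 - \<gamma>) * L * P - (P * L - Q)"
    using \<open>N > 0\<close> unfolding absorb by simp
  finally show ?thesis
    by (simp add: N_def P_def L_def Q_def algebra_simps)
qed

theorem lemma2:
  fixes X :: "'a::euclidean_space set" and K c :: nat and \<gamma> :: real
    and p :: "'a \<Rightarrow> nat \<Rightarrow> real" and pbar :: "'a \<Rightarrow> nat set \<Rightarrow> real"
    and loss :: "(nat \<Rightarrow> real) \<Rightarrow> nat \<Rightarrow> real" and g :: "'a \<Rightarrow> nat \<Rightarrow> real"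
  assumes K2: "2 \<le> K"
    and c_range: "1 \<le> c" "c \<le> K - 1"
    and dens: "joint_density X K p"
    and pbar_def: "\<And>x Yb. x \<in> X \<Longrightarrow> Yb \<in> comp_label_sets K c \<Longrightarrow>
        pbar x Yb = (\<Sum>y\<in>label_set K - Yb. p x y) / real ((K - 1) choose c)"
    and \<gamma>_range: "0 \<le> \<gamma>" "\<gamma> \<le> 1"
    and loss_nonneg: "\<And>v y. 0 \<le> loss v y"
    and fin_risk: "set_integrable lborel X (\<lambda>x. \<Sum>y\<in>label_set K. p x y * loss (g x) y)"
    and fin_comp: "set_integrable lborel X (comp_integrand K c \<gamma> pbar loss g)"
    and fin_marg: "set_integrable lborel X (\<lambda>x. marginal K p x * cumulative_loss K loss (g x))"
  shows "unbiased_comp_risk X K c \<gamma> p pbar loss g = class_risk X K p loss g"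
proof -
  have X_sets: "X \<in> sets lborel"
    using dens by (simp add: joint_density_def)
  have label_sets: "comp_label_sets K c = {Y. Y \<subseteq> label_set K \<and> card Y = c}"
    by (simp add: comp_label_sets_def label_set_def)
  have pointwise: "comp_integrand K c \<gamma> pbar loss g x
      + \<gamma> * (marginal K p x * cumulative_loss K loss (g x))
      = (\<Sum>y\<in>label_set K. p x y * loss (g x) y)" if "x \<in> X" for x
    using complementary_risk_pointwise[of "label_set K" K c "p x" \<gamma> "loss (g x)"] c_range
    by (simp add: comp_integrand_def marginal_def cumulative_loss_def label_sets pbar_def \<open>x \<in> X\<close>)
      (simp add: label_set_def)
  have "unbiased_comp_risk X K c \<gamma> p pbar loss g
      = (LINT x:X|lborel. comp_integrand K c \<gamma> pbar loss g x
          + \<gamma> * (marginal K p x * cumulative_loss K loss (g x)))"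
    unfolding unbiased_comp_risk_def
    using set_integral_add(2)[OF fin_comp set_integrable_mult_right[OF fin_marg, of \<gamma>]] by simp
  also have "\<dots> = class_risk X K p loss g"
    unfolding class_risk_def by (rule set_lebesgue_integral_cong[OF X_sets]) (simp add: pointwise)
  finally show ?thesis .
qed

end
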